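(* Let $\phi\in C^4(\mathbb{R})$ be a profile function of a graph-like forward self-similar solution to the planar surface diffusion flow, i.e. $$\frac{\phi(x_1) - x_1\phi'(x_1)}{4\,v(x_1)} = -\frac{1}{v}\frac{d}{dx_1}\Big(\frac{1}{v}\frac{dk}{dx_1}\Big)\quad\text{on }\mathbb{R},\qquad v=\sqrt{1+(\phi')^2},\ k=\phi''/v^3.$$ Assume $\phi$ is globally Lipschitz and $\phi' - a_0\in L^1(\mathbb{R})$ for some $a_0\in\mathbb{R}$. Then $\phi(x_1) = a_0 x_1$ for all $x_1\in\mathbb{R}$.
   Context: The displayed equation is the profile equation $\frac{x\cdot\mathbf{n}}{4}=-\partial_s^2 k$ for the graph $\Gamma_*=\{(x_1,\phi(x_1))\}$ with upward normal $\mathbf{n}=(-\phi',1)/v$, curvature $k$ and arc-length derivative $\partial_s=v^{-1}\partial_{x_1}$, so that $t^{1/4}\Gamma_*$ solves the surface diffusion flow $V=-\partial_s^2 k$. *)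

theory Defs
  imports "HOL-Analysis.Analysis"
begin

definition C_k :: "nat \<Rightarrow> (real \<Rightarrow> real) \<Rightarrow> bool" where
  "C_k m f \<longleftrightarrow>
     (\<forall>j<m. \<forall>x. ((deriv ^^ j) f has_real_derivative (deriv ^^ Suc j) f x) (at x))
     \<and> continuous_on UNIV ((deriv ^^ m) f)"

definition sd_v :: "(real \<Rightarrow> real) \<Rightarrow> real \<Rightarrow> real" where
  "sd_v f x = sqrt (1 + (deriv f x)\<^sup>2)"

definition sd_k :: "(real \<Rightarrow> real) \<Rightarrow> real \<Rightarrow> real" where
  "sd_k f x = deriv (deriv f) x / (sd_v f x) ^ 3"

definition sd_profile :: "(real \<Rightarrow> real) \<Rightarrow> bool" where
  "sd_profile f \<longleftrightarrow>
     (\<forall>x. (f x - x * deriv f x) / (4 * sd_v f x)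
          = - (1 / sd_v f x) * deriv (\<lambda>y. (1 / sd_v f y) * deriv (sd_k f) y) x)"

end

theory Submission
  imports Defs
begin

text \<open>Write \<open>X = (x, \<phi> x)\<close>, \<open>\<tau> = (1, \<phi>') / v\<close> for the unit tangent and \<open>\<tau>\<^sub>0 = (1, a0) / v0\<close> for
the direction of the line \<open>y = a0 x\<close>. Along a solution, \<open>W = k \<partial>\<^sub>s k + X \<cdot> (\<tau> - \<tau>\<^sub>0) / 4\<close>
satisfies \<open>W' = v (\<partial>\<^sub>s k)\<^sup>2 + v (1 - \<tau> \<cdot> \<tau>\<^sub>0) / 4 \<ge> 0\<close>. Since \<open>\<phi> - a0 x\<close> is bounded and
\<open>|\<tau> - \<tau>\<^sub>0| \<le> |\<phi>' - a0|\<close> is integrable, \<open>X \<cdot> (\<tau> - \<tau>\<^sub>0)\<close> is bounded above by an integrable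
function for \<open>x \<ge> 0\<close> and below by one for \<open>x \<le> 0\<close>. So if \<open>W(x\<^sub>0) > 0\<close>, then
\<open>(k\<^sup>2/2)' = v k \<partial>\<^sub>s k\<close> exceeds \<open>W(x\<^sub>0)\<close> up to an integrable error on \<open>[x\<^sub>0, \<infinity>)\<close>, hence \<open>k\<^sup>2\<close>
grows linearly and \<open>|\<phi>''| = v\<^sup>3 |k| \<ge> 1\<close> on arbitrarily long intervals, which is impossible for
bounded \<open>\<phi>'\<close>; symmetrically \<open>W \<ge> 0\<close>. Thus \<open>W = 0\<close>, so \<open>\<partial>\<^sub>s k = 0\<close>, the profile equation reduces
to \<open>\<phi> = x \<phi>'\<close>, and \<open>\<phi>\<close> is linear with slope \<open>a0\<close>.\<close>

lemma lipschitz_on_has_real_derivative_abs_le: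
  fixes f :: "real \<Rightarrow> real"
  assumes "lipschitz_on L UNIV f" "(f has_real_derivative d) (at x)"
  shows "\<bar>d\<bar> \<le> L"
proof -
  have "((\<lambda>y. (f y - f x) / (y - x)) \<longlongrightarrow> d) (at x)"
    using assms(2) by (simp add: DERIV_def has_field_derivative_iff)
  moreover have "\<bar>(f y - f x) / (y - x)\<bar> \<le> L" for y
  proof -
    have "\<bar>f y - f x\<bar> \<le> L * \<bar>y - x\<bar>"
      using assms(1) by (auto simp: lipschitz_on_def dist_real_def)
    then show ?thesis
      by (cases "y = x") (auto simp: abs_divide divide_le_eq lipschitz_on_nonneg[OF assms(1)])
  qed
  ultimately show ?thesis
    by (intro tendsto_upperbound[OF tendsto_rabs]) auto
qed

lemma interval_length_le_if_abs_deriv_ge_1: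
  fixes f f' :: "real \<Rightarrow> real"
  assumes "a \<le> b"
    and "\<And>x. a \<le> x \<Longrightarrow> x \<le> b \<Longrightarrow> (f has_real_derivative f' x) (at x)"
    and "\<And>x. a \<le> x \<Longrightarrow> x \<le> b \<Longrightarrow> 1 \<le> \<bar>f' x\<bar>"
    and "\<And>x. \<bar>f x\<bar> \<le> L"
  shows "b - a \<le> 2 * L"
proof (cases "a = b")
  case True
  then show ?thesis using assms(4)[of a] by simp
next
  case False
  then obtain z where z: "a < z" "z < b" "f b - f a = (b - a) * f' z"
    using MVT2[of a b f f'] assms(1,2) by force
  have "b - a \<le> (b - a) * \<bar>f' z\<bar>"
    using assms(3)[of z] z by (simp add: mult_le_cancel_left1)
  also have "\<dots> = \<bar>f b - f a\<bar>"
    using z by (simp add: abs_mult)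
  also have "\<dots> \<le> 2 * L"
    using assms(4)[of a] assms(4)[of b] by linarith
  finally show ?thesis .
qed

lemma increment_ge_if_deriv_ge:
  fixes h h' c :: "real \<Rightarrow> real"
  assumes "s \<le> t"
    and "\<And>x. (h has_real_derivative h' x) (at x)"
    and "\<And>x. s \<le> x \<Longrightarrow> x \<le> t \<Longrightarrow> \<delta> - c x \<le> h' x"
    and "c integrable_on UNIV" "\<And>x. 0 \<le> c x"
  shows "\<delta> * (t - s) - integral UNIV c \<le> h t - h s"
proof -
  have c_int: "c integrable_on {s..t}"
    using assms(4) by (rule integrable_on_subinterval) simp
  have "((\<lambda>x. \<delta> - c x) has_integral \<delta> * (t - s) - integral {s..t} c) {s..t}"
    using has_integral_diff[OF has_integral_const_real integrable_integral[OF c_int]] assms(1)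
    by (simp add: mult.commute)
  moreover have "(h' has_integral h t - h s) {s..t}"
    using assms(1,2) by (intro fundamental_theorem_of_calculus)
      (auto simp: has_real_derivative_iff_has_vector_derivative intro: has_vector_derivative_at_within)
  ultimately have "\<delta> * (t - s) - integral {s..t} c \<le> h t - h s"
    by (rule has_integral_le) (use assms(3) in auto)
  moreover have "integral {s..t} c \<le> integral UNIV c"
    using assms(4,5) c_int by (intro integral_subset_le) auto
  ultimately show ?thesis by linarith
qed

lemma abs_diff_le_integral_abs_deriv:
  fixes F f :: "real \<Rightarrow> real"
  assumes "\<And>x. (F has_real_derivative f x) (at x)" and "(\<lambda>x. \<bar>f x\<bar>) integrable_on UNIV"
  shows "\<bar>F y - F x\<bar> \<le> integral UNIV (\<lambda>x. \<bar>f x\<bar>)"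
proof -
  have "\<bar>F t - F s\<bar> \<le> integral UNIV (\<lambda>x. \<bar>f x\<bar>)" if "s \<le> t" for s t
  proof -
    have "0 * (t - s) - integral UNIV (\<lambda>x. \<bar>f x\<bar>) \<le> F t - F s"
      by (rule increment_ge_if_deriv_ge[OF that assms(1) _ assms(2)]) auto
    moreover have "0 * (t - s) - integral UNIV (\<lambda>x. \<bar>f x\<bar>) \<le> - F t - - F s"
      by (rule increment_ge_if_deriv_ge[where h="\<lambda>x. - F x", OF that DERIV_minus[OF assms(1)] _ assms(2)])
        auto
    ultimately show ?thesis by linarith
  qed
  from this[of x y] this[of y x] show ?thesis
    by (cases "x \<le> y") (auto simp: abs_minus_commute)
qed

lemma integrable_lborel_const_iff: "integrable lborel (\<lambda>x::real. c) \<longleftrightarrow> c = (0::real)"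
  by (simp add: integrable_iff_bounded ennreal_mult_less_top)

lemma one_plus_mult_le_sqrt_mult_sqrt:
  fixes a t :: real
  shows "1 + a * t \<le> sqrt (1 + a\<^sup>2) * sqrt (1 + t\<^sup>2)"
proof -
  have "(1 + a * t)\<^sup>2 \<le> (1 + a\<^sup>2) * (1 + t\<^sup>2)"
    using zero_le_power2[of "a - t"] by (simp add: power2_eq_square algebra_simps)
  then show ?thesis
    by (metis real_sqrt_abs real_sqrt_le_mono real_sqrt_mult abs_ge_self order_trans)
qed

lemma DERIV_sqrt_one_plus_power2:
  assumes "(h has_real_derivative h') (at x)"
  shows "((\<lambda>y. sqrt (1 + (h y)\<^sup>2)) has_real_derivative h x * h' / sqrt (1 + (h x)\<^sup>2)) (at x)"
proof -
  have "0 < 1 + (h x)\<^sup>2" by (simp add: add_pos_nonneg)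
  then show ?thesis
    using assms by (auto intro!: derivative_eq_intros simp: field_simps)
qed

lemma abs_div_sqrt_one_plus_power2_diff_le:
  fixes a t :: real
  shows "\<bar>t / sqrt (1 + t\<^sup>2) - a / sqrt (1 + a\<^sup>2)\<bar> \<le> \<bar>t - a\<bar>"
proof -
  define D where "D t = 1 / (sqrt (1 + t\<^sup>2) * (1 + t\<^sup>2))" for t :: real
  have has_deriv: "((\<lambda>t. t / sqrt (1 + t\<^sup>2)) has_real_derivative D z) (at z)" for z
  proof -
    have "0 < 1 + z\<^sup>2" by (simp add: add_pos_nonneg)
    then show ?thesis
      unfolding D_def
      by (auto intro!: derivative_eq_intros DERIV_sqrt_one_plus_power2[OF DERIV_ident]
          simp: field_simps power2_eq_square)
  qed
  have "\<bar>D z\<bar> \<le> 1" for z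
  proof -
    have "1 * 1 \<le> sqrt (1 + z\<^sup>2) * (1 + z\<^sup>2)" by (intro mult_mono) auto
    then show ?thesis by (simp add: D_def)
  qed
  then have "\<bar>y / sqrt (1 + y\<^sup>2) - x / sqrt (1 + x\<^sup>2)\<bar> \<le> y - x" if "x < y" for x y
    using MVT2[OF that has_deriv] that
    by (auto simp: abs_mult intro: mult_left_le)
  from this[of a t] this[of t a] show ?thesis
    by (cases a t rule: linorder_cases) (auto simp: abs_minus_commute)
qed

locale smooth_graph =
  fixes \<phi> f1 f2 f3 :: "real \<Rightarrow> real"
  assumes has_deriv_\<phi>: "\<And>x. (\<phi> has_real_derivative f1 x) (at x)"
    and has_deriv_f1: "\<And>x. (f1 has_real_derivative f2 x) (at x)"
    and has_deriv_f2: "\<And>x. (f2 has_real_derivative f3 x) (at x)"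
begin

definition v :: "real \<Rightarrow> real" where "v x = sqrt (1 + (f1 x)\<^sup>2)"

definition k :: "real \<Rightarrow> real" where "k x = f2 x / v x ^ 3"

definition k_x :: "real \<Rightarrow> real" where "k_x x = f3 x / v x ^ 3 - 3 * f1 x * (f2 x)\<^sup>2 / v x ^ 5"

definition k_s :: "real \<Rightarrow> real" where "k_s x = k_x x / v x"

text \<open>The position vector \<open>(x, \<phi> x)\<close> against the unit tangent \<open>(1, f1 x) / v x\<close>.\<close>
definition q :: "real \<Rightarrow> real" where "q x = (x + \<phi> x * f1 x) / v x"

lemma v_pos: "0 < v x"
  by (simp add: v_def add_pos_nonneg)

lemma v_ge_1: "1 \<le> v x"
  by (simp add: v_def)

lemma v_power2: "(v x)\<^sup>2 = 1 + (f1 x)\<^sup>2"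
  by (simp add: v_def add_nonneg_nonneg)

lemma has_deriv_v: "(v has_real_derivative f1 x * f2 x / v x) (at x)"
  unfolding v_def[abs_def] by (rule DERIV_sqrt_one_plus_power2[OF has_deriv_f1])

lemma has_deriv_k: "(k has_real_derivative k_x x) (at x)"
proof -
  have "(k has_real_derivative (f3 x * v x ^ 3 - f2 x * (3 * v x ^ 2 * (f1 x * f2 x / v x))) / (v x ^ 3)\<^sup>2) (at x)"
    unfolding k_def[abs_def] using v_pos[of x]
    by (auto intro!: derivative_eq_intros has_deriv_f2 has_deriv_v simp: power2_eq_square)
  moreover have "(f3 x * v x ^ 3 - f2 x * (3 * v x ^ 2 * (f1 x * f2 x / v x))) / (v x ^ 3)\<^sup>2 = k_x x"
    unfolding k_x_def using v_pos[of x] by (simp add: field_simps power2_eq_square eval_nat_numeral)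
  ultimately show ?thesis by simp
qed

lemma has_deriv_q: "(q has_real_derivative v x + k x * (\<phi> x - x * f1 x)) (at x)"
proof -
  have "(q has_real_derivative ((1 + (f1 x * f1 x + \<phi> x * f2 x)) * v x - (x + \<phi> x * f1 x) * (f1 x * f2 x / v x)) / (v x)\<^sup>2) (at x)"
    (is "(q has_real_derivative ?D) _")
    unfolding q_def[abs_def] using v_pos[of x]
    by (auto intro!: derivative_eq_intros has_deriv_\<phi> has_deriv_f1 has_deriv_v simp: power2_eq_square)
  moreover have "?D = v x + k x * (\<phi> x - x * f1 x)"
  proof -
    have "(1 + (f1 x * f1 x + \<phi> x * f2 x)) * (v x)\<^sup>2 - (x + \<phi> x * f1 x) * (f1 x * f2 x) 
        = (v x)\<^sup>2 * (v x)\<^sup>2 + f2 x * (\<phi> x - x * f1 x)"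
      using v_power2[of x] by algebra
    then show ?thesis
      using v_pos[of x] unfolding k_def by (simp add: field_simps power2_eq_square eval_nat_numeral)
  qed
  ultimately show ?thesis by simp
qed

lemma one_le_abs_f2_if_one_le_k_power2: "1 \<le> (k x)\<^sup>2 \<Longrightarrow> 1 \<le> \<bar>f2 x\<bar>"
proof -
  assume "1 \<le> (k x)\<^sup>2"
  then have "1 \<le> \<bar>k x\<bar>"
    by (metis abs_ge_self abs_le_square_iff abs_one le_trans one_le_power power_one)
  moreover have "1 \<le> v x ^ 3" using v_ge_1[of x] by simp
  ultimately have "1 * 1 \<le> \<bar>k x\<bar> * v x ^ 3" by (intro mult_mono) auto
  moreover have "f2 x = k x * v x ^ 3" unfolding k_def using v_pos[of x] by simp
  ultimately show ?thesis using v_pos[of x] by (simp add: abs_mult)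
qed

lemma deriv_const_if_eq_x_mult_deriv:
  assumes "\<And>x. \<phi> x = x * f1 x"
  shows "f1 x = f1 0"
proof -
  have x_f2: "x * f2 x = 0" for x
  proof -
    have "((\<lambda>x. \<phi> x - x * f1 x) has_real_derivative f1 x - (1 * f1 x + f2 x * x)) (at x)"
      by (intro DERIV_diff DERIV_mult DERIV_ident has_deriv_\<phi> has_deriv_f1)
    then have "((\<lambda>_. 0) has_real_derivative - (x * f2 x)) (at x)"
      using assms by (simp add: algebra_simps)
    from DERIV_unique[OF this DERIV_const] show ?thesis by simp
  qed
  show ?thesis
  proof (cases x "0::real" rule: linorder_cases)
    case less
    then obtain z where "z < 0" "f1 0 - f1 x = (0 - x) * f2 z"
      using MVT2[OF less has_deriv_f1] by blast
    with x_f2[of z] show ?thesis by simp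
  next
    case greater
    then obtain z where "0 < z" "f1 x - f1 0 = (x - 0) * f2 z"
      using MVT2[OF greater has_deriv_f1] by blast
    with x_f2[of z] show ?thesis by simp
  qed simp
qed

end

text \<open>\<open>has_deriv_k_s\<close> is the profile equation multiplied by \<open>-v\<close>.\<close>
locale sd_expander = smooth_graph +
  fixes a0 L :: real
  assumes has_deriv_k_s: "\<And>x. (k_s has_real_derivative - (\<phi> x - x * f1 x) / 4) (at x)"
    and abs_f1_le: "\<And>x. \<bar>f1 x\<bar> \<le> L"
    and integrable_f1_minus_a0: "integrable lborel (\<lambda>x. f1 x - a0)"
begin

definition v0 :: real where "v0 = sqrt (1 + a0\<^sup>2)"

definition I :: real where "I = integral UNIV (\<lambda>x. \<bar>f1 x - a0\<bar>)"

text \<open>The position vector against \<open>\<tau> - \<tau>\<^sub>0\<close>, where \<open>\<tau>\<^sub>0 = (1, a0) / v0\<close>.\<close>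
definition r :: "real \<Rightarrow> real" where "r x = q x - (x + a0 * \<phi> x) / v0"

definition W :: "real \<Rightarrow> real" where "W x = k x * k_s x + r x / 4"

definition C :: real where "C = sqrt (1 + L\<^sup>2) * (\<bar>\<phi> 0\<bar> + I) / 4"

lemma v0_pos: "0 < v0"
  by (simp add: v0_def add_pos_nonneg)

lemma v0_power2: "v0\<^sup>2 = 1 + a0\<^sup>2"
  by (simp add: v0_def add_nonneg_nonneg)

lemma v_le: "v x \<le> sqrt (1 + L\<^sup>2)"
proof -
  have "\<bar>f1 x\<bar> \<le> \<bar>L\<bar>" using abs_f1_le[of x] by linarith
  then show ?thesis unfolding v_def by (simp add: abs_le_square_iff)
qed

lemma L_nonneg: "0 \<le> L"
  using abs_f1_le[of 0] by linarith

lemma tangent_inner_le_1: "1 + a0 * f1 x \<le> v0 * v x"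
  unfolding v0_def v_def by (rule one_plus_mult_le_sqrt_mult_sqrt)

lemma integrable_abs_f1_minus_a0: "(\<lambda>x. \<bar>f1 x - a0\<bar>) integrable_on UNIV"
  using has_integral_integral_lborel[OF integrable_abs[OF integrable_f1_minus_a0]] by blast

lemma I_nonneg: "0 \<le> I"
  unfolding I_def by (rule integral_nonneg[OF integrable_abs_f1_minus_a0]) auto

lemma C_nonneg: "0 \<le> C"
  unfolding C_def using I_nonneg by simp

lemma abs_tilt_le: "\<bar>\<phi> x - a0 * x\<bar> \<le> \<bar>\<phi> 0\<bar> + I"
proof -
  have "\<bar>(\<phi> x - a0 * x) - (\<phi> 0 - a0 * 0)\<bar> \<le> I"
    unfolding I_def
    by (rule abs_diff_le_integral_abs_deriv[where F="\<lambda>x. \<phi> x - a0 * x" and f="\<lambda>x. f1 x - a0"])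
      (auto intro!: derivative_eq_intros has_deriv_\<phi> integrable_abs_f1_minus_a0)
  then show ?thesis by linarith
qed

lemma r_eq: "r x = x * ((1 + a0 * f1 x) / v x - v0) + (\<phi> x - a0 * x) * (f1 x / v x - a0 / v0)"
proof -
  have "v0 * v0 = 1 + a0 * a0"
    using v0_power2 by (simp add: power2_eq_square)
  then show ?thesis
    unfolding r_def q_def using v_pos[of x] v0_pos by (simp add: field_simps) algebra
qed

lemma abs_tilt_term_le: "\<bar>(\<phi> x - a0 * x) * (f1 x / v x - a0 / v0)\<bar> \<le> (\<bar>\<phi> 0\<bar> + I) * \<bar>f1 x - a0\<bar>"
  unfolding abs_mult v_def v0_def using I_nonneg
  by (intro mult_mono abs_tilt_le abs_div_sqrt_one_plus_power2_diff_le) auto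

lemma r_le_if_nonneg:
  assumes "0 \<le> x"
  shows "r x \<le> (\<bar>\<phi> 0\<bar> + I) * \<bar>f1 x - a0\<bar>"
proof -
  have "(1 + a0 * f1 x) / v x \<le> v0"
    using tangent_inner_le_1[of x] v_pos[of x] by (simp add: pos_divide_le_eq)
  then have "x * ((1 + a0 * f1 x) / v x - v0) \<le> 0"
    using assms by (simp add: mult_nonneg_nonpos)
  then show ?thesis
    unfolding r_eq by (rule add_decreasing[OF _ abs_le_D1[OF abs_tilt_term_le]])
qed

lemma r_ge_if_nonpos:
  assumes "x \<le> 0"
  shows "- ((\<bar>\<phi> 0\<bar> + I) * \<bar>f1 x - a0\<bar>) \<le> r x"
proof -
  have "(1 + a0 * f1 x) / v x \<le> v0"
    using tangent_inner_le_1[of x] v_pos[of x] by (simp add: pos_divide_le_eq)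
  then have "0 \<le> x * ((1 + a0 * f1 x) / v x - v0)"
    using assms by (simp add: mult_nonpos_nonpos)
  moreover have "- ((\<bar>\<phi> 0\<bar> + I) * \<bar>f1 x - a0\<bar>) \<le> (\<phi> x - a0 * x) * (f1 x / v x - a0 / v0)"
    using abs_le_D2[OF abs_tilt_term_le[of x]] by linarith
  ultimately show ?thesis
    unfolding r_eq by (rule add_increasing)
qed

lemma has_deriv_W: "(W has_real_derivative v x * (k_s x)\<^sup>2 + (v x - (1 + a0 * f1 x) / v0) / 4) (at x)"
  unfolding W_def[abs_def] r_def[abs_def]
  by (rule DERIV_cong[OF DERIV_add[OF DERIV_mult[OF has_deriv_k has_deriv_k_s]
        DERIV_cdivide[OF DERIV_diff[OF has_deriv_q
          DERIV_cdivide[OF DERIV_add[OF DERIV_ident DERIV_cmult[OF has_deriv_\<phi>]]]]]]])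
    (use v_pos[of x] v0_pos in \<open>simp add: k_s_def field_simps power2_eq_square\<close>)

lemma tangent_defect_nonneg: "0 \<le> v x - (1 + a0 * f1 x) / v0"
  using tangent_inner_le_1[of x] v0_pos by (simp add: pos_divide_le_eq mult.commute)

lemma W_mono:
  assumes "x \<le> y"
  shows "W x \<le> W y"
proof (rule DERIV_nonneg_imp_nondecreasing[OF assms])
  fix z
  have "0 \<le> v z * (k_s z)\<^sup>2 + (v z - (1 + a0 * f1 z) / v0) / 4"
    using v_pos[of z] tangent_defect_nonneg[of z] by simp
  then show "\<exists>y. (W has_real_derivative y) (at z) \<and> 0 \<le> y"
    using has_deriv_W by blast
qed

lemma has_deriv_half_k_power2: "((\<lambda>t. (k t)\<^sup>2 / 2) has_real_derivative v x * (k x * k_s x)) (at x)"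
  using v_pos[of x] by (auto intro!: derivative_eq_intros has_deriv_k simp: k_s_def)

lemma half_k_power2_deriv_ge_if_W_ge:
  assumes "0 < \<delta>" "0 \<le> x" "\<delta> \<le> W x"
  shows "\<delta> - C * \<bar>f1 x - a0\<bar> \<le> v x * (k x * k_s x)"
proof -
  define e where "e = (\<bar>\<phi> 0\<bar> + I) * \<bar>f1 x - a0\<bar>"
  have "v x * e \<le> sqrt (1 + L\<^sup>2) * e"
    using v_le[of x] I_nonneg by (simp add: e_def mult_right_mono)
  moreover have "\<delta> \<le> v x * \<delta>"
    using v_ge_1[of x] assms(1) by simp
  moreover have "C * \<bar>f1 x - a0\<bar> = sqrt (1 + L\<^sup>2) * e / 4"
    by (simp add: C_def e_def)
  ultimately have "\<delta> - C * \<bar>f1 x - a0\<bar> \<le> v x * (\<delta> - e / 4)"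
    by (simp add: algebra_simps)
  also have "\<dots> \<le> v x * (k x * k_s x)"
    using assms(3) r_le_if_nonneg[OF assms(2)] v_pos[of x] by (simp add: W_def e_def)
  finally show ?thesis .
qed

lemma half_k_power2_deriv_le_if_W_le:
  assumes "0 < \<delta>" "x \<le> 0" "W x \<le> - \<delta>"
  shows "v x * (k x * k_s x) \<le> - \<delta> + C * \<bar>f1 x - a0\<bar>"
proof -
  define e where "e = (\<bar>\<phi> 0\<bar> + I) * \<bar>f1 x - a0\<bar>"
  have "v x * (k x * k_s x) \<le> v x * (- \<delta> + e / 4)"
    using assms(3) r_ge_if_nonpos[OF assms(2)] v_pos[of x] by (simp add: W_def e_def)
  also have "\<dots> \<le> - \<delta> + C * \<bar>f1 x - a0\<bar>"
  proof -
    have "v x * e \<le> sqrt (1 + L\<^sup>2) * e"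
      using v_le[of x] I_nonneg by (simp add: e_def mult_right_mono)
    moreover have "\<delta> \<le> v x * \<delta>"
      using v_ge_1[of x] assms(1) by simp
    moreover have "C * \<bar>f1 x - a0\<bar> = sqrt (1 + L\<^sup>2) * e / 4"
      by (simp add: C_def e_def)
    ultimately show ?thesis
      by (simp add: algebra_simps)
  qed
  finally show ?thesis .
qed

lemma interval_length_le_if_k_power2_ge_1:
  assumes "a \<le> b" "\<And>t. a \<le> t \<Longrightarrow> t \<le> b \<Longrightarrow> 1 \<le> (k t)\<^sup>2"
  shows "b - a \<le> 2 * L"
  using assms by (intro interval_length_le_if_abs_deriv_ge_1[OF _ has_deriv_f1 _ abs_f1_le] one_le_abs_f2_if_one_le_k_power2)

lemma W_nonpos: "W x0 \<le> 0"
proof (rule ccontr)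
  assume "\<not> W x0 \<le> 0"
  define \<delta> where "\<delta> = W x0"
  define x1 where "x1 = max x0 0"
  define a where "a = x1 + (1 / 2 + C * I) / \<delta>"
  have \<delta>_pos: "0 < \<delta>"
    using \<open>\<not> W x0 \<le> 0\<close> by (simp add: \<delta>_def)
  have "1 \<le> (k t)\<^sup>2" if "a \<le> t" for t
  proof -
    have "x1 \<le> a"
      using C_nonneg I_nonneg \<delta>_pos by (simp add: a_def)
    have "\<delta> * (t - x1) - integral UNIV (\<lambda>x. C * \<bar>f1 x - a0\<bar>) \<le> (k t)\<^sup>2 / 2 - (k x1)\<^sup>2 / 2"
    proof (rule increment_ge_if_deriv_ge[OF _ has_deriv_half_k_power2])
      show "x1 \<le> t"
        using \<open>x1 \<le> a\<close> that by simp
      show "\<delta> - C * \<bar>f1 s - a0\<bar> \<le> v s * (k s * k_s s)" if "x1 \<le> s" for s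
        using half_k_power2_deriv_ge_if_W_ge[OF \<delta>_pos, of s] W_mono[of x0 s] that
        by (simp add: x1_def \<delta>_def)
    qed (use C_nonneg integrable_abs_f1_minus_a0 in \<open>auto intro: integrable_on_mult_right\<close>)
    moreover have "1 / 2 + C * I \<le> \<delta> * (t - x1)"
      using that \<delta>_pos by (simp add: a_def field_simps)
    moreover have "integral UNIV (\<lambda>x. C * \<bar>f1 x - a0\<bar>) = C * I"
      by (simp add: I_def)
    ultimately show ?thesis
      using zero_le_power2[of "k x1"] by linarith
  qed
  then have "(a + 2 * L + 1) - a \<le> 2 * L"
    using L_nonneg by (intro interval_length_le_if_k_power2_ge_1) auto
  then show False by simp
qed

lemma W_nonneg: "0 \<le> W x0"
proof (rule ccontr)
  assume "\<not> 0 \<le> W x0"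
  define \<delta> where "\<delta> = - W x0"
  define x1 where "x1 = min x0 0"
  define b where "b = x1 - (1 / 2 + C * I) / \<delta>"
  have \<delta>_pos: "0 < \<delta>"
    using \<open>\<not> 0 \<le> W x0\<close> by (simp add: \<delta>_def)
  have "1 \<le> (k t)\<^sup>2" if "t \<le> b" for t
  proof -
    have "b \<le> x1"
      using C_nonneg I_nonneg \<delta>_pos by (simp add: b_def)
    have "\<delta> * (x1 - t) - integral UNIV (\<lambda>x. C * \<bar>f1 x - a0\<bar>) \<le> - ((k x1)\<^sup>2 / 2) - - ((k t)\<^sup>2 / 2)"
    proof (rule increment_ge_if_deriv_ge[OF _ DERIV_minus[OF has_deriv_half_k_power2]])
      show "t \<le> x1"
        using \<open>b \<le> x1\<close> that by simp
      show "\<delta> - C * \<bar>f1 s - a0\<bar> \<le> - (v s * (k s * k_s s))" if "s \<le> x1" for s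
        using half_k_power2_deriv_le_if_W_le[OF \<delta>_pos, of s] W_mono[of s x0] that
        by (simp add: x1_def \<delta>_def)
    qed (use C_nonneg integrable_abs_f1_minus_a0 in \<open>auto intro: integrable_on_mult_right\<close>)
    moreover have "1 / 2 + C * I \<le> \<delta> * (x1 - t)"
      using that \<delta>_pos by (simp add: b_def field_simps)
    moreover have "integral UNIV (\<lambda>x. C * \<bar>f1 x - a0\<bar>) = C * I"
      by (simp add: I_def)
    ultimately show ?thesis
      using zero_le_power2[of "k x1"] by linarith
  qed
  then have "b - (b - 2 * L - 1) \<le> 2 * L"
    using L_nonneg by (intro interval_length_le_if_k_power2_ge_1) auto
  then show False by simp
qed

lemma k_s_eq_0: "k_s x = 0"
proof -
  have "W = (\<lambda>_. 0)"
    using W_nonpos W_nonneg by (simp add: fun_eq_iff order_antisym)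
  then have "((\<lambda>_. 0) has_real_derivative v x * (k_s x)\<^sup>2 + (v x - (1 + a0 * f1 x) / v0) / 4) (at x)"
    using has_deriv_W[of x] by simp
  from DERIV_unique[OF this DERIV_const]
  have "v x * (k_s x)\<^sup>2 + (v x - (1 + a0 * f1 x) / v0) / 4 = 0" .
  moreover have "0 \<le> v x * (k_s x)\<^sup>2"
    using v_pos[of x] by simp
  moreover have "0 \<le> (v x - (1 + a0 * f1 x) / v0) / 4"
    using tangent_defect_nonneg[of x] by simp
  ultimately have "v x * (k_s x)\<^sup>2 = 0"
    using add_nonneg_eq_0_iff by blast
  then show ?thesis
    using v_pos[of x] by simp
qed

lemma profile_eq_x_mult_f1: "\<phi> x = x * f1 x"
proof -
  have "k_s = (\<lambda>_. 0)"
    using k_s_eq_0 by (simp add: fun_eq_iff)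
  then have "((\<lambda>_. 0) has_real_derivative - (\<phi> x - x * f1 x) / 4) (at x)"
    using has_deriv_k_s[of x] by simp
  from DERIV_unique[OF this DERIV_const] show ?thesis by simp
qed

lemma profile_linear: "\<phi> x = a0 * x"
proof -
  have f1_const: "f1 x = f1 0" for x
    by (rule deriv_const_if_eq_x_mult_deriv[OF profile_eq_x_mult_f1])
  then have "(\<lambda>x. f1 x - a0) = (\<lambda>x. f1 0 - a0)"
    by (intro ext) (rule arg_cong[where f="\<lambda>c. c - a0"])
  then have "integrable lborel (\<lambda>x::real. f1 0 - a0)"
    using integrable_f1_minus_a0 by simp
  then have "f1 0 = a0"
    by (simp add: integrable_lborel_const_iff)
  then show ?thesis
    using profile_eq_x_mult_f1[of x] f1_const[of x] by simp
qed

end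

lemma sd_expander_if_sd_profile:
  fixes \<phi> :: "real \<Rightarrow> real"
  assumes "C_k 4 \<phi>" "sd_profile \<phi>" "lipschitz_on L UNIV \<phi>"
    and "integrable lborel (\<lambda>x. deriv \<phi> x - a0)"
  shows "sd_expander \<phi> (deriv \<phi>) (deriv (deriv \<phi>)) (deriv (deriv (deriv \<phi>))) a0 L"
proof -
  have has_deriv: "((deriv ^^ j) \<phi> has_real_derivative (deriv ^^ Suc j) \<phi> x) (at x)" if "j < 4" for j x
    using assms(1) that unfolding C_k_def by blast
  interpret smooth_graph \<phi> "deriv \<phi>" "deriv (deriv \<phi>)" "deriv (deriv (deriv \<phi>))"
    using has_deriv[of 0] has_deriv[of 1] has_deriv[of 2] by unfold_locales (simp_all add: numeral_2_eq_2)
  have "(k_s has_real_derivative - (\<phi> x - x * deriv \<phi> x) / 4) (at x)" for x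
  proof -
    have "deriv (deriv (deriv \<phi>)) differentiable (at x)"
      using has_deriv[of 3 x] by (auto simp: numeral_3_eq_3 real_differentiable_def)
    then have "k_s differentiable (at x)"
      unfolding k_s_def[abs_def] k_x_def[abs_def] using v_pos[of x] has_deriv_f1 has_deriv_f2 has_deriv_v
      by (intro derivative_intros) (auto simp: real_differentiable_def)
    then obtain D where D: "(k_s has_real_derivative D) (at x)"
      by (auto simp: real_differentiable_def)
    have sd_v_eq: "sd_v \<phi> = v"
      by (simp add: fun_eq_iff sd_v_def v_def)
    have sd_k_eq: "sd_k \<phi> = k"
      by (simp add: fun_eq_iff sd_k_def k_def sd_v_eq)
    have "(\<lambda>y. 1 / sd_v \<phi> y * deriv (sd_k \<phi>) y) = k_s"
      by (simp add: fun_eq_iff sd_v_eq sd_k_eq k_s_def DERIV_imp_deriv[OF has_deriv_k])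
    then have "(\<phi> x - x * deriv \<phi> x) / (4 * v x) = - (1 / v x) * D"
      using assms(2) DERIV_imp_deriv[OF D] by (simp add: sd_profile_def sd_v_eq)
    then have "(\<phi> x - x * deriv \<phi> x + 4 * D) * v x = 0"
      using v_pos[of x] by (simp add: field_simps)
    then have "D = - (\<phi> x - x * deriv \<phi> x) / 4"
      using v_pos[of x] by simp
    with D show ?thesis by simp
  qed
  moreover have "\<bar>deriv \<phi> x\<bar> \<le> L" for x
    by (rule lipschitz_on_has_real_derivative_abs_le[OF assms(3) has_deriv_\<phi>])
  ultimately show ?thesis
    using assms(4) by (intro sd_expander.intro sd_expander_axioms.intro smooth_graph_axioms)
qed

theorem corollary3p4:
  fixes \<phi> :: "real \<Rightarrow> real" and a0 :: real
  assumes "C_k 4 \<phi>"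
    and "sd_profile \<phi>"
    and "\<exists>L. L\<ge>0 \<and> lipschitz_on L UNIV \<phi>"
    and "integrable lborel (\<lambda>x. deriv \<phi> x - a0)"
  shows "\<forall>x. \<phi> x = a0 * x"
proof -
  obtain L where "lipschitz_on L UNIV \<phi>"
    using assms(3) by blast
  then interpret sd_expander \<phi> "deriv \<phi>" "deriv (deriv \<phi>)" "deriv (deriv (deriv \<phi>))" a0 L
    using assms(1,2,4) by (intro sd_expander_if_sd_profile)
  show ?thesis
    using profile_linear by blast
qed

end
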